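(* The four identities (J1) $x\wedge y\approx y\wedge x$, (J2) $x\wedge(y\wedge z)\approx(x\wedge y)\wedge z$, (J4) $x''\approx x$, (J5) $x'\approx (x\wedge y)'\wedge(x\wedge y')'$ form a 4-base for the variety $\mathbb{BA}$ of Boolean algebras (in the language $\langle\wedge,{}'\rangle$). In particular, the idempotent law $x\wedge x\approx x$ follows from (J1), (J2), (J4), (J5).
   Context: Algebras are of type $\langle \wedge, {}'\rangle$ with $\wedge$ binary and ${}'$ unary. The variety $\mathbb{BA}$ of Boolean algebras in this language consists of the algebras $\langle B,\wedge,{}'\rangle$ obtained from Boolean algebras by keeping only meet and complement (equivalently, the variety generated by the two-element Boolean algebra $\mathbf 2$ with meet and complement). A base for a variety is an independent set of identities (no identity in the set follows from the others) that defines the variety; an $n$-base is a base with exactly $n$ identities. *)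

theory Defs
  imports Main
begin

datatype trm = Var nat | Meet trm trm | Cpl trm

type_synonym identity = "trm \<times> trm"

fun subst :: "(nat \<Rightarrow> trm) \<Rightarrow> trm \<Rightarrow> trm" where
  "subst \<sigma> (Var n) = \<sigma> n"
| "subst \<sigma> (Meet s t) = Meet (subst \<sigma> s) (subst \<sigma> t)"
| "subst \<sigma> (Cpl s) = Cpl (subst \<sigma> s)"

inductive derivable :: "identity set \<Rightarrow> trm \<Rightarrow> trm \<Rightarrow> bool" for E where
  ax: "(s, t) \<in> E \<Longrightarrow> derivable E (subst \<sigma> s) (subst \<sigma> t)"
| refl: "derivable E t t"
| sym: "derivable E s t \<Longrightarrow> derivable E t s"
| trans: "derivable E s t \<Longrightarrow> derivable E t u \<Longrightarrow> derivable E s u"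
| cong_meet: "derivable E s1 t1 \<Longrightarrow> derivable E s2 t2 \<Longrightarrow> derivable E (Meet s1 s2) (Meet t1 t2)"
| cong_cpl: "derivable E s t \<Longrightarrow> derivable E (Cpl s) (Cpl t)"

fun eval :: "('a \<Rightarrow> 'a \<Rightarrow> 'a) \<Rightarrow> ('a \<Rightarrow> 'a) \<Rightarrow> (nat \<Rightarrow> 'a) \<Rightarrow> trm \<Rightarrow> 'a" where
  "eval m c v (Var n) = v n"
| "eval m c v (Meet s t) = m (eval m c v s) (eval m c v t)"
| "eval m c v (Cpl s) = c (eval m c v s)"

text \<open>An identity holds in the variety BA iff it holds in the two-element
  Boolean algebra 2 = (bool, conjunction, negation), which generates BA.\<close>
definition holds_in_BA :: "identity \<Rightarrow> bool" where
  "holds_in_BA e \<longleftrightarrow> (\<forall>v :: nat \<Rightarrow> bool. eval (\<and>) Not v (fst e) = eval (\<and>) Not v (snd e))"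

definition defines_BA :: "identity set \<Rightarrow> bool" where
  "defines_BA E \<longleftrightarrow> (\<forall>s t. derivable E s t \<longleftrightarrow> holds_in_BA (s, t))"

definition independent :: "identity set \<Rightarrow> bool" where
  "independent E \<longleftrightarrow> (\<forall>e \<in> E. \<not> derivable (E - {e}) (fst e) (snd e))"

definition is_n_base_BA :: "nat \<Rightarrow> identity set \<Rightarrow> bool" where
  "is_n_base_BA n E \<longleftrightarrow> defines_BA E \<and> independent E \<and> finite E \<and> card E = n"

abbreviation "vx \<equiv> Var 0"
abbreviation "vy \<equiv> Var 1"
abbreviation "vz \<equiv> Var 2"

definition J1 :: identity where "J1 = (Meet vx vy, Meet vy vx)"
definition J2 :: identity where "J2 = (Meet vx (Meet vy vz), Meet (Meet vx vy) vz)"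
definition J4 :: identity where "J4 = (Cpl (Cpl vx), vx)"
definition J5 :: identity where
  "J5 = (Cpl vx, Meet (Cpl (Meet vx vy)) (Cpl (Meet vx (Cpl vy))))"

end

theory Submission
  imports Defs
begin

(* Substituting x' for x in (J5) and using (J4) gives x = (x' y)' (x' y')', Huntington's
  axiom written with meet instead of join; so (J1), (J2), (J4), (J5) make every model a
  Boolean algebra with x v y = (x' y')'.  Completeness then follows because every identity of
  the two-element algebra holds in every Boolean algebra (Shannon expansion in one variable
  at a time), in particular in the free algebra of the theory.  Independence is shown by four
  small models, each violating exactly one of the identities. *)

unbundle lattice_syntax

definition satisfies :: "('a \<Rightarrow> 'a \<Rightarrow> 'a) \<Rightarrow> ('a \<Rightarrow> 'a) \<Rightarrow> identity \<Rightarrow> bool" where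
  "satisfies m c e \<longleftrightarrow> (\<forall>v. eval m c v (fst e) = eval m c v (snd e))"

lemma eval_subst: "eval m c v (subst \<sigma> t) = eval m c (\<lambda>n. eval m c v (\<sigma> n)) t"
  by (induction t) auto

lemma derivable_sound:
  assumes "\<forall>e\<in>E. satisfies m c e" and "derivable E s t"
  shows "satisfies m c (s, t)"
proof -
  have "eval m c v s = eval m c v t" for v
    using assms(2)
  proof (induction arbitrary: v rule: derivable.induct)
    case (ax s t \<sigma>)
    then show ?case
      using assms(1) by (force simp: satisfies_def eval_subst)
  qed simp_all
  then show ?thesis
    by (simp add: satisfies_def)
qed

lemma not_derivable_if_refuted:
  assumes "\<forall>e\<in>E. satisfies m c e" and "\<not> satisfies m c (s, t)"
  shows "\<not> derivable E s t"
  using derivable_sound assms by blast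

fun vars :: "trm \<Rightarrow> nat set" where
  "vars (Var n) = {n}"
| "vars (Meet s t) = vars s \<union> vars t"
| "vars (Cpl s) = vars s"

lemma finite_vars: "finite (vars t)"
  by (induction t) auto

lemma eval_cong: "(\<And>n. n \<in> vars t \<Longrightarrow> v n = v' n) \<Longrightarrow> eval m c v t = eval m c v' t"
  by (induction t) auto

lemma satisfies_iff_on_three_variables:
  assumes "vars s \<union> vars t \<subseteq> {0, 1, 2}"
  shows "satisfies m c (s, t) \<longleftrightarrow> (\<forall>x y z.
    eval m c (\<lambda>n. if n = 0 then x else if n = 1 then y else z) s =
    eval m c (\<lambda>n. if n = 0 then x else if n = 1 then y else z) t)"
proof
  assume eq: "\<forall>x y z. eval m c (\<lambda>n. if n = 0 then x else if n = 1 then y else z) s =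
    eval m c (\<lambda>n. if n = 0 then x else if n = 1 then y else z) t"
  have "eval m c v s = eval m c v t" for v
  proof -
    let ?v = "\<lambda>n. if n = 0 then v 0 else if n = 1 then v 1 else v 2"
    have "\<And>n. n \<in> vars s \<union> vars t \<Longrightarrow> v n = ?v n"
      using assms by auto
    then show ?thesis
      using eq eval_cong[of s v ?v] eval_cong[of t v ?v] by simp
  qed
  then show "satisfies m c (s, t)"
    by (simp add: satisfies_def)
qed (simp add: satisfies_def)

lemma satisfies_J1: "satisfies m c J1 \<longleftrightarrow> (\<forall>x y. m x y = m y x)"
  by (simp add: J1_def satisfies_iff_on_three_variables)

lemma satisfies_J2: "satisfies m c J2 \<longleftrightarrow> (\<forall>x y z. m x (m y z) = m (m x y) z)"
  by (simp add: J2_def satisfies_iff_on_three_variables)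

lemma satisfies_J4: "satisfies m c J4 \<longleftrightarrow> (\<forall>x. c (c x) = x)"
  by (simp add: J4_def satisfies_iff_on_three_variables)

lemma satisfies_J5: "satisfies m c J5 \<longleftrightarrow> (\<forall>x y. c x = m (c (m x y)) (c (m x (c y))))"
  by (simp add: J5_def satisfies_iff_on_three_variables)

lemma holds_in_BA_iff_satisfies: "holds_in_BA e \<longleftrightarrow> satisfies (\<and>) Not e"
  by (simp add: holds_in_BA_def satisfies_def)

lemma J_distinct: "J1 \<noteq> J2" "J1 \<noteq> J4" "J1 \<noteq> J5" "J2 \<noteq> J4" "J2 \<noteq> J5" "J4 \<noteq> J5"
  by (simp_all add: J1_def J2_def J4_def J5_def)

lemma J1_not_derivable: "\<not> derivable {J2, J4, J5} (fst J1) (snd J1)"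
proof (rule not_derivable_if_refuted[where m = "\<lambda>x y. x" and c = "id :: bool \<Rightarrow> bool"])
  show "\<forall>e\<in>{J2, J4, J5}. satisfies (\<lambda>x y. x) (id :: bool \<Rightarrow> bool) e"
    by (simp add: satisfies_J2 satisfies_J4 satisfies_J5)
  show "\<not> satisfies (\<lambda>x y. x) (id :: bool \<Rightarrow> bool) (fst J1, snd J1)"
    unfolding prod.collapse satisfies_J1 by auto
qed

datatype three = T0 | T1 | T2

fun three_meet :: "three \<Rightarrow> three \<Rightarrow> three" where
  "three_meet T0 T0 = T0" | "three_meet T0 T1 = T0" | "three_meet T0 T2 = T1"
| "three_meet T1 T0 = T0" | "three_meet T1 T1 = T1" | "three_meet T1 T2 = T2"
| "three_meet T2 T0 = T1" | "three_meet T2 T1 = T2" | "three_meet T2 T2 = T2"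

fun three_compl :: "three \<Rightarrow> three" where
  "three_compl T0 = T2" | "three_compl T1 = T1" | "three_compl T2 = T0"

lemma J2_not_derivable: "\<not> derivable {J1, J4, J5} (fst J2) (snd J2)"
proof (rule not_derivable_if_refuted[where m = three_meet and c = three_compl])
  have "three_meet x y = three_meet y x"
    and "three_compl (three_compl x) = x"
    and "three_compl x = three_meet (three_compl (three_meet x y)) (three_compl (three_meet x (three_compl y)))"
    for x y by (cases x; cases y; simp)+
  then show "\<forall>e\<in>{J1, J4, J5}. satisfies three_meet three_compl e"
    by (simp add: satisfies_J1 satisfies_J4 satisfies_J5)
  have "three_meet T0 (three_meet T0 T2) \<noteq> three_meet (three_meet T0 T0) T2"
    by simp
  then show "\<not> satisfies three_meet three_compl (fst J2, snd J2)"
    unfolding prod.collapse satisfies_J2 by blast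
qed

lemma J4_not_derivable: "\<not> derivable {J1, J2, J5} (fst J4) (snd J4)"
proof (rule not_derivable_if_refuted[where m = "(\<and>)" and c = "\<lambda>x. True"])
  show "\<forall>e\<in>{J1, J2, J5}. satisfies (\<and>) (\<lambda>x. True) e"
    by (auto simp add: satisfies_J1 satisfies_J2 satisfies_J5)
  show "\<not> satisfies (\<and>) (\<lambda>x. True) (fst J4, snd J4)"
    unfolding prod.collapse satisfies_J4 by blast
qed

lemma J5_not_derivable: "\<not> derivable {J1, J2, J4} (fst J5) (snd J5)"
proof (rule not_derivable_if_refuted[where m = "(\<and>)" and c = id])
  show "\<forall>e\<in>{J1, J2, J4}. satisfies (\<and>) id e"
    by (auto simp add: satisfies_J1 satisfies_J2 satisfies_J4)
  show "\<not> satisfies (\<and>) id (fst J5, snd J5)"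
    by (auto simp add: satisfies_J5)
qed

lemma independent_J: "independent {J1, J2, J4, J5}"
  unfolding independent_def
  using J1_not_derivable J2_not_derivable J4_not_derivable J5_not_derivable J_distinct
  by (auto simp add: insert_Diff_if insert_commute)

locale meet_compl_algebra =
  fixes meet :: "'a \<Rightarrow> 'a \<Rightarrow> 'a" (infixl "\<cdot>" 70)
    and compl :: "'a \<Rightarrow> 'a" ("_\<^sup>c" [1000] 1000)
  assumes meet_commute: "x \<cdot> y = y \<cdot> x"
    and meet_assoc: "x \<cdot> (y \<cdot> z) = (x \<cdot> y) \<cdot> z"
    and compl_compl: "x\<^sup>c\<^sup>c = x"
    and compl_split: "x\<^sup>c = (x \<cdot> y)\<^sup>c \<cdot> (x \<cdot> y\<^sup>c)\<^sup>c"
begin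

lemma meet_left_commute: "x \<cdot> (y \<cdot> z) = y \<cdot> (x \<cdot> z)"
  by (metis meet_assoc meet_commute)

lemmas meet_ac = meet_commute meet_assoc[symmetric] meet_left_commute

lemma huntington: "x = (x\<^sup>c \<cdot> y)\<^sup>c \<cdot> (x\<^sup>c \<cdot> y\<^sup>c)\<^sup>c"
  using compl_split[of "x\<^sup>c" y] by (simp only: compl_compl)

lemma meet_compl_meet_compl_sym: "x \<cdot> (x \<cdot> y\<^sup>c)\<^sup>c = y \<cdot> (y \<cdot> x\<^sup>c)\<^sup>c"
proof -
  have "x \<cdot> (x \<cdot> y\<^sup>c)\<^sup>c = (x\<^sup>c \<cdot> y)\<^sup>c \<cdot> (x\<^sup>c \<cdot> y\<^sup>c)\<^sup>c \<cdot> (x \<cdot> y\<^sup>c)\<^sup>c"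
    by (simp only: huntington[of x y, symmetric])
  also have "\<dots> = (y\<^sup>c \<cdot> x)\<^sup>c \<cdot> (y\<^sup>c \<cdot> x\<^sup>c)\<^sup>c \<cdot> (y \<cdot> x\<^sup>c)\<^sup>c"
    by (simp only: meet_ac)
  also have "\<dots> = y \<cdot> (y \<cdot> x\<^sup>c)\<^sup>c"
    by (simp only: huntington[of y x, symmetric])
  finally show ?thesis .
qed

lemma meet_compl_eq: "x \<cdot> x\<^sup>c = y \<cdot> y\<^sup>c"
proof -
  have "x \<cdot> x\<^sup>c = (x \<cdot> (x \<cdot> y\<^sup>c)\<^sup>c) \<cdot> (x \<cdot> y)\<^sup>c"
    by (subst compl_split[of x y]) (simp only: meet_ac)
  also have "\<dots> = (y \<cdot> (y \<cdot> x\<^sup>c)\<^sup>c) \<cdot> (y \<cdot> x)\<^sup>c"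
    by (simp only: meet_compl_meet_compl_sym meet_commute[of x y])
  also have "\<dots> = y \<cdot> y\<^sup>c"
    by (subst compl_split[of y x]) (simp only: meet_ac)
  finally show ?thesis .
qed

lemma meet_zero: "y \<cdot> (x \<cdot> x\<^sup>c) = x \<cdot> x\<^sup>c"
proof -
  have "y \<cdot> (y \<cdot> y\<^sup>c) = (y \<cdot> y) \<cdot> ((y \<cdot> y)\<^sup>c \<cdot> (y \<cdot> y\<^sup>c)\<^sup>c)"
    by (simp only: compl_split[of y y, symmetric] meet_assoc)
  also have "\<dots> = ((y \<cdot> y) \<cdot> (y \<cdot> y)\<^sup>c) \<cdot> (y \<cdot> y\<^sup>c)\<^sup>c"
    by (rule meet_assoc)
  also have "\<dots> = (y \<cdot> y\<^sup>c) \<cdot> (y \<cdot> y\<^sup>c)\<^sup>c"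
    by (simp only: meet_compl_eq[of "y \<cdot> y" y])
  also have "\<dots> = y \<cdot> y\<^sup>c"
    by (rule meet_compl_eq)
  finally show ?thesis
    by (simp only: meet_compl_eq[of x y])
qed

lemma one_idem: "(x \<cdot> x\<^sup>c)\<^sup>c \<cdot> (x \<cdot> x\<^sup>c)\<^sup>c = (x \<cdot> x\<^sup>c)\<^sup>c"
  using compl_split[of "x \<cdot> x\<^sup>c" x] by (simp only: meet_zero meet_commute[of "x \<cdot> x\<^sup>c"])

lemma one_meet: "(x \<cdot> x\<^sup>c)\<^sup>c \<cdot> y = y"
proof -
  have "y = (y\<^sup>c \<cdot> y\<^sup>c)\<^sup>c \<cdot> (y\<^sup>c \<cdot> y)\<^sup>c"
    using compl_split[of "y\<^sup>c" "y\<^sup>c"] by (simp only: compl_compl)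
  also have "y\<^sup>c \<cdot> y = x \<cdot> x\<^sup>c"
    by (metis meet_commute meet_compl_eq)
  finally have y: "y = (y\<^sup>c \<cdot> y\<^sup>c)\<^sup>c \<cdot> (x \<cdot> x\<^sup>c)\<^sup>c" .
  have "(x \<cdot> x\<^sup>c)\<^sup>c \<cdot> y = (y\<^sup>c \<cdot> y\<^sup>c)\<^sup>c \<cdot> ((x \<cdot> x\<^sup>c)\<^sup>c \<cdot> (x \<cdot> x\<^sup>c)\<^sup>c)"
    by (subst y) (simp only: meet_ac)
  also have "\<dots> = y"
    by (simp only: one_idem y[symmetric])
  finally show ?thesis .
qed

lemma meet_idem: "x \<cdot> x = x"
proof -
  have "x\<^sup>c = (x \<cdot> x)\<^sup>c"
    using compl_split[of x x] by (simp only: one_meet meet_commute[of _ "(x \<cdot> x\<^sup>c)\<^sup>c"])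
  then show ?thesis
    by (metis compl_compl)
qed

lemma compl_meet_compl_absorb: "x\<^sup>c \<cdot> (x \<cdot> y)\<^sup>c = x\<^sup>c"
proof -
  have split: "x\<^sup>c = (x \<cdot> y)\<^sup>c \<cdot> (x \<cdot> y\<^sup>c)\<^sup>c"
    by (rule compl_split)
  have "x\<^sup>c \<cdot> (x \<cdot> y)\<^sup>c = ((x \<cdot> y)\<^sup>c \<cdot> (x \<cdot> y)\<^sup>c) \<cdot> (x \<cdot> y\<^sup>c)\<^sup>c"
    by (subst split) (simp only: meet_ac)
  also have "\<dots> = x\<^sup>c"
    by (simp only: meet_idem split[symmetric])
  finally show ?thesis .
qed

lemma meet_compl_absorb: "x \<cdot> (x\<^sup>c \<cdot> y)\<^sup>c = x"
  using compl_meet_compl_absorb[of "x\<^sup>c" y] by (simp only: compl_compl)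

lemma meet_compl_meet: "x \<cdot> (x \<cdot> y)\<^sup>c = x \<cdot> y\<^sup>c"
proof -
  have "x \<cdot> y\<^sup>c = (x \<cdot> (y \<cdot> x\<^sup>c)\<^sup>c) \<cdot> (y \<cdot> x)\<^sup>c"
    by (subst compl_split[of y x]) (simp only: meet_ac)
  also have "\<dots> = x \<cdot> (x \<cdot> y)\<^sup>c"
    by (simp only: meet_commute[of y] meet_compl_absorb)
  finally show ?thesis ..
qed

lemma meet_sup_distrib: "x \<cdot> (y\<^sup>c \<cdot> z\<^sup>c)\<^sup>c = ((x \<cdot> y)\<^sup>c \<cdot> (x \<cdot> z)\<^sup>c)\<^sup>c"
proof -
  let ?d = "x \<cdot> (y\<^sup>c \<cdot> z\<^sup>c)\<^sup>c"
  have "?d \<cdot> y = x \<cdot> y"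
    by (simp only: meet_ac meet_compl_absorb)
  moreover have "?d \<cdot> y\<^sup>c = x \<cdot> y\<^sup>c \<cdot> z"
    by (metis meet_commute meet_left_commute meet_compl_meet compl_compl)
  ultimately have "?d\<^sup>c = (x \<cdot> y)\<^sup>c \<cdot> (x \<cdot> y\<^sup>c \<cdot> z)\<^sup>c"
    using compl_split[of ?d y] by (simp only:)
  also have "(x \<cdot> z)\<^sup>c = (x \<cdot> y \<cdot> z)\<^sup>c \<cdot> (x \<cdot> y\<^sup>c \<cdot> z)\<^sup>c"
    using compl_split[of "x \<cdot> z" y] by (simp only: meet_ac)
  then have "(x \<cdot> y)\<^sup>c \<cdot> (x \<cdot> z)\<^sup>c = ((x \<cdot> y)\<^sup>c \<cdot> (x \<cdot> y \<cdot> z)\<^sup>c) \<cdot> (x \<cdot> y\<^sup>c \<cdot> z)\<^sup>c"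
    by (simp only: meet_assoc)
  then have "(x \<cdot> y)\<^sup>c \<cdot> (x \<cdot> y\<^sup>c \<cdot> z)\<^sup>c = (x \<cdot> y)\<^sup>c \<cdot> (x \<cdot> z)\<^sup>c"
    by (simp only: compl_meet_compl_absorb)
  finally show ?thesis
    by (metis compl_compl)
qed

end

context boolean_algebra
begin

lemma inf_compl_inf: "a \<sqinter> - (a \<sqinter> x) = a \<sqinter> - x"
  by (simp add: inf_sup_distrib1)

lemma eq_by_inf_cases: "a \<sqinter> x = a \<sqinter> y \<Longrightarrow> - a \<sqinter> x = - a \<sqinter> y \<Longrightarrow> x = y"
  by (metis inf_sup_distrib2 sup_compl_top inf_top_left)

lemma inf_cases_left: "a \<sqinter> ((a \<sqinter> x) \<squnion> (- a \<sqinter> y)) = a \<sqinter> x"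
  by (simp add: inf_sup_distrib1 inf_assoc[symmetric])

lemma inf_cases_right: "- a \<sqinter> ((a \<sqinter> x) \<squnion> (- a \<sqinter> y)) = - a \<sqinter> y"
  by (simp add: inf_sup_distrib1 inf_assoc[symmetric])

lemma inf_cases_inf:
  "((a \<sqinter> x) \<squnion> (- a \<sqinter> y)) \<sqinter> ((a \<sqinter> u) \<squnion> (- a \<sqinter> v)) = (a \<sqinter> (x \<sqinter> u)) \<squnion> (- a \<sqinter> (y \<sqinter> v))"
  by (rule eq_by_inf_cases[of a])
    (metis inf_cases_left inf.assoc inf.left_commute, metis inf_cases_right inf.assoc inf.left_commute)

lemma inf_cases_compl: "- ((a \<sqinter> x) \<squnion> (- a \<sqinter> y)) = (a \<sqinter> - x) \<squnion> (- a \<sqinter> - y)"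
  by (rule eq_by_inf_cases[of a])
    (metis inf_cases_left inf_compl_inf, metis inf_cases_right inf_compl_inf)

end

lemma eval_two_valued:
  fixes w :: "nat \<Rightarrow> 'a::boolean_algebra"
  assumes "\<forall>n\<in>vars t. w n = \<bottom> \<or> w n = \<top>"
  shows "eval inf uminus w t = (if eval (\<and>) Not (\<lambda>n. w n = \<top>) t then \<top> else \<bottom>)"
  using assms by (induction t) auto

lemma eval_shannon:
  fixes w :: "nat \<Rightarrow> 'a::boolean_algebra"
  shows "eval inf uminus w t =
    (w k \<sqinter> eval inf uminus (w(k := \<top>)) t) \<squnion> (- w k \<sqinter> eval inf uminus (w(k := \<bottom>)) t)"
proof (induction t)
  case (Var n)
  show ?case
    by (cases "n = k") (simp_all add: inf_sup_distrib2[symmetric])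
next
  case (Meet s t)
  then show ?case
    by (simp only: eval.simps inf_cases_inf)
next
  case (Cpl s)
  then show ?case
    by (simp only: eval.simps inf_cases_compl)
qed

lemma eval_eq_if_holds_in_BA:
  fixes w :: "nat \<Rightarrow> 'a::boolean_algebra"
  assumes "holds_in_BA (s, t)"
  shows "eval inf uminus w s = eval inf uminus w t"
proof -
  have "eval inf uminus w s = eval inf uminus w t"
    if "finite F" and "\<forall>n\<in>vars s \<union> vars t - F. w n = \<bottom> \<or> w n = \<top>" for F and w :: "nat \<Rightarrow> 'a"
    using that
  proof (induction F arbitrary: w rule: finite_induct)
    case empty
    then show ?case
      using assms by (simp add: eval_two_valued holds_in_BA_def)
  next
    case (insert k F)
    have "eval inf uminus (w(k := b)) s = eval inf uminus (w(k := b)) t" if "b \<in> {\<bottom>, \<top>}" for b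
      using insert.prems that by (intro insert.IH) auto
    then show ?case
      using eval_shannon[of w s k] eval_shannon[of w t k] by simp
  qed
  then show ?thesis
    using finite_vars by blast
qed

quotient_type free_J = trm / "derivable {J1, J2, J4, J5}"
  by (intro equivpI reflpI sympI transpI) (auto intro: derivable.intros)

lift_definition free_meet :: "free_J \<Rightarrow> free_J \<Rightarrow> free_J" is Meet
  by (rule derivable.cong_meet)

lift_definition free_compl :: "free_J \<Rightarrow> free_J" is Cpl
  by (rule derivable.cong_cpl)

lemma eval_free_J: "eval free_meet free_compl (\<lambda>n. abs_free_J (\<sigma> n)) t = abs_free_J (subst \<sigma> t)"
  by (induction t) (simp_all add: free_meet.abs_eq free_compl.abs_eq)

lemma free_J_satisfies_J:
  assumes "e \<in> {J1, J2, J4, J5}"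
  shows "satisfies free_meet free_compl e"
  unfolding satisfies_def
proof
  fix v :: "nat \<Rightarrow> free_J"
  define \<sigma> where "\<sigma> n = rep_free_J (v n)" for n
  have v: "v = (\<lambda>n. abs_free_J (\<sigma> n))"
    by (simp add: \<sigma>_def Quotient3_abs_rep[OF Quotient3_free_J])
  have "derivable {J1, J2, J4, J5} (subst \<sigma> (fst e)) (subst \<sigma> (snd e))"
    using assms by (intro derivable.ax) simp
  then show "eval free_meet free_compl v (fst e) = eval free_meet free_compl v (snd e)"
    by (simp add: v eval_free_J free_J.abs_eq_iff)
qed

interpretation free: meet_compl_algebra free_meet free_compl
proof -
  have "satisfies free_meet free_compl J1" "satisfies free_meet free_compl J2"
    "satisfies free_meet free_compl J4" "satisfies free_meet free_compl J5"
    by (simp_all add: free_J_satisfies_J)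
  then show "meet_compl_algebra free_meet free_compl"
    unfolding meet_compl_algebra_def satisfies_J1 satisfies_J2 satisfies_J4 satisfies_J5 by blast
qed

instantiation free_J :: boolean_algebra
begin

definition "inf_free_J = free_meet"
definition "uminus_free_J = free_compl"
definition "x \<squnion> y = free_compl (free_meet (free_compl x) (free_compl y))"
definition "x - y = free_meet x (free_compl y)"
definition "\<bottom> = free_meet (abs_free_J vx) (free_compl (abs_free_J vx))"
definition "\<top> = free_compl \<bottom>"
definition "x \<le> y \<longleftrightarrow> free_meet x y = x"
definition "x < y \<longleftrightarrow> x \<le> y \<and> \<not> y \<le> (x :: free_J)"

instance
proof
  fix x y z :: free_J
  note defs = inf_free_J_def uminus_free_J_def sup_free_J_def minus_free_J_def
    bot_free_J_def top_free_J_def less_eq_free_J_def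
  show "x < y \<longleftrightarrow> x \<le> y \<and> \<not> y \<le> x"
    by (simp add: less_free_J_def)
  show "x \<le> x"
    by (simp add: defs free.meet_idem)
  show "x \<le> z" if "x \<le> y" and "y \<le> z"
    using that unfolding defs by (metis free.meet_assoc)
  show "x = y" if "x \<le> y" and "y \<le> x"
    using that unfolding defs by (metis free.meet_commute)
  show "x \<sqinter> y \<le> x"
    unfolding defs by (metis free.meet_assoc free.meet_commute free.meet_idem)
  show "x \<sqinter> y \<le> y"
    unfolding defs by (metis free.meet_assoc free.meet_idem)
  show "x \<le> y \<sqinter> z" if "x \<le> y" and "x \<le> z"
    using that unfolding defs by (metis free.meet_assoc)
  show "x \<le> x \<squnion> y"
    unfolding defs by (rule free.meet_compl_absorb)
  show "y \<le> x \<squnion> y"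
    unfolding defs by (metis free.meet_compl_absorb free.meet_commute)
  show "y \<squnion> z \<le> x" if "y \<le> x" and "z \<le> x"
    using that unfolding defs by (metis free.meet_sup_distrib free.meet_commute)
  show "x \<squnion> y \<sqinter> z = (x \<squnion> y) \<sqinter> (x \<squnion> z)"
    unfolding defs by (metis free.meet_sup_distrib free.compl_compl)
  show "\<bottom> \<le> x"
    unfolding defs by (metis free.meet_zero free.meet_commute)
  show "x \<le> \<top>"
    unfolding defs by (metis free.one_meet free.meet_commute)
  show "x \<sqinter> - x = \<bottom>"
    unfolding defs by (rule free.meet_compl_eq)
  show "x \<squnion> - x = \<top>"
    unfolding defs by (metis free.meet_compl_eq free.compl_compl free.meet_commute)
  show "x - y = x \<sqinter> - y"
    by (simp add: defs)
qed

end

lemma subst_Var: "subst Var t = t"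
  by (induction t) auto

lemma derivable_J_if_holds_in_BA:
  assumes "holds_in_BA (s, t)"
  shows "derivable {J1, J2, J4, J5} s t"
proof -
  have "eval inf uminus (\<lambda>n. abs_free_J (Var n)) s = eval inf uminus (\<lambda>n. abs_free_J (Var n)) t"
    using assms by (rule eval_eq_if_holds_in_BA)
  then have "abs_free_J s = abs_free_J t"
    by (simp add: inf_free_J_def uminus_free_J_def eval_free_J subst_Var)
  then show ?thesis
    by (simp add: free_J.abs_eq_iff)
qed

lemma holds_in_BA_if_derivable_J:
  assumes "derivable {J1, J2, J4, J5} s t"
  shows "holds_in_BA (s, t)"
proof -
  have "\<forall>e\<in>{J1, J2, J4, J5}. satisfies (\<and>) Not e"
    by (auto simp add: satisfies_J1 satisfies_J2 satisfies_J4 satisfies_J5)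
  then show ?thesis
    unfolding holds_in_BA_iff_satisfies using assms by (rule derivable_sound)
qed

theorem theorem2p2:
  shows "is_n_base_BA 4 {J1, J2, J4, J5} \<and> derivable {J1, J2, J4, J5} (Meet vx vx) vx"
proof
  have "defines_BA {J1, J2, J4, J5}"
    unfolding defines_BA_def using derivable_J_if_holds_in_BA holds_in_BA_if_derivable_J by blast
  then show "is_n_base_BA 4 {J1, J2, J4, J5}"
    using independent_J J_distinct by (simp add: is_n_base_BA_def)
  show "derivable {J1, J2, J4, J5} (Meet vx vx) vx"
    by (rule derivable_J_if_holds_in_BA) (simp add: holds_in_BA_def)
qed

end
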